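(* Let $d\ge2$, $a\ge d$, $d'=1$, $t\ge2$, and fix $n\ne j$ in $[t]$. Let $F_{n,j}$ be the $D\times d$ matrix, $D=\binom{d+1}{2}$, with rows indexed by $\{k_1,k_2\}\in\operatorname{Mult}_2([d])$, columns by $k_3\in[d]$, and entries $y_{n,j}(\{k_1,k_2\},k_3)$. Then there exist at least $\binom{D}{d}-\binom{2d-1}{d}$ linearly independent homogeneous polynomials of degree $d$, each a linear combination of the maximal $d\times d$ minors of $F_{n,j}$, that vanish on the attention variety.
   Context: Setup: $Q,K\in\mathbb R^{a\times d}$, $V\in\mathbb R^{1\times d}$, $A=K^\top Q$, $\varphi_W(X)=VX(X^\top AX)$ for $X=(x_{kn})\in\mathbb R^{d\times t}$. For $\mathcal A\in\operatorname{Mult}_2([d])$ (size-2 multisets on $[d]$), $b\in[d]$, $n\ne j$: $c_{n,j}(\mathcal A,b)$ is the coefficient of $(\prod_{u\in\mathcal A}x_{un})x_{bj}$ in $\varphi_W(X)[1,j]$ and $y_{n,j}(\mathcal A,b)=c_{n,j}(\mathcal A,b)/|\operatorname{Perm}(\mathcal A)|$, $\operatorname{Perm}$ the set of distinct orderings. $\mu$ maps $W=(Q,K,V)$ to all scaled coefficients (ambient coordinates with the same names); the attention variety is the Zariski closure of $\operatorname{im}\mu$. *)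

theory Defs
  imports "Jordan_Normal_Form.Determinant" "HOL-Library.Multiset_Order"
begin

text \<open>Indices: [d] is rendered as {0..<d}, [a] as {0..<a}.
  Q, K :: nat \<Rightarrow> nat \<Rightarrow> real are a x d matrices (entries Q r p, r < a, p < d),
  V :: nat \<Rightarrow> real is the 1 x d row vector.\<close>

definition attA :: "nat \<Rightarrow> (nat \<Rightarrow> nat \<Rightarrow> real) \<Rightarrow> (nat \<Rightarrow> nat \<Rightarrow> real) \<Rightarrow> nat \<Rightarrow> nat \<Rightarrow> real" where
  "attA a Q K p q = (\<Sum>r<a. K r p * Q r q)"

text \<open>phi_W(X)[1,j] = sum_n sum_{k,p,q} V_k x_{kn} x_{pn} A_{pq} x_{qj}.  For n ~= j the monomial
  (prod_{u in M} x_{un}) x_{bj} arises exactly from the orderings (k,p) of the multiset M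
  with q = b, so its coefficient is the sum below.\<close>

definition Mult2 :: "nat \<Rightarrow> nat multiset set" where
  "Mult2 d = {M. size M = 2 \<and> set_mset M \<subseteq> {0..<d}}"

definition Perm2 :: "nat multiset \<Rightarrow> (nat \<times> nat) set" where
  "Perm2 M = {(u, v). {#u, v#} = M}"

definition coef_c :: "nat \<Rightarrow> (nat \<Rightarrow> nat \<Rightarrow> real) \<Rightarrow> (nat \<Rightarrow> nat \<Rightarrow> real) \<Rightarrow> (nat \<Rightarrow> real)
    \<Rightarrow> nat \<Rightarrow> nat \<Rightarrow> nat multiset \<Rightarrow> nat \<Rightarrow> real" where
  "coef_c a Q K V n j M b = (\<Sum>(u, v)\<in>Perm2 M. V u * attA a Q K v b)"

definition coef_y :: "nat \<Rightarrow> (nat \<Rightarrow> nat \<Rightarrow> real) \<Rightarrow> (nat \<Rightarrow> nat \<Rightarrow> real) \<Rightarrow> (nat \<Rightarrow> real)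
    \<Rightarrow> nat \<Rightarrow> nat \<Rightarrow> nat multiset \<Rightarrow> nat \<Rightarrow> real" where
  "coef_y a Q K V n j M b = coef_c a Q K V n j M b / real (card (Perm2 M))"

definition minor_rows :: "nat \<Rightarrow> (nat multiset \<Rightarrow> nat \<Rightarrow> real) \<Rightarrow> nat multiset set \<Rightarrow> real" where
  "minor_rows d F S = det (mat d d (\<lambda>(i, l). F (sorted_list_of_set S ! i) l))"

definition row_subsets :: "nat \<Rightarrow> nat multiset set set" where
  "row_subsets d = {S. S \<subseteq> Mult2 d \<and> card S = d}"

definition minor_comb :: "nat \<Rightarrow> (nat multiset set \<Rightarrow> real) \<Rightarrow> (nat multiset \<Rightarrow> nat \<Rightarrow> real) \<Rightarrow> real" where
  "minor_comb d c F = (\<Sum>S\<in>row_subsets d. c S * minor_rows d F S)"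

end

theory Submission
  imports Defs
begin

text \<open>On the image of the parametrization, \<open>y(M, b) = \<Sum>\<^sub>k B(V)\<^sub>M\<^sub>k A\<^sub>k\<^sub>b\<close>, where the
  \<open>D \<times> d\<close> matrix \<open>B(V)\<close> has entries linear in \<open>V\<close>. Hence every maximal minor of \<open>F\<close>
  factors as \<open>det A\<close> times the corresponding minor of \<open>B(V)\<close>, a homogeneous form of degree
  \<open>d\<close> in the \<open>d\<close> entries of \<open>V\<close>, and such forms span a space of dimension
  \<open>(2d-1 choose d)\<close>. So the \<open>(D choose d)\<close> maximal minors satisfy at least
  \<open>(D choose d) - (2d-1 choose d)\<close> independent linear relations on the image. These
  combinations of minors stay independent as polynomials in \<open>F\<close> because distinct maximal
  minors are: on the 0/1 matrix whose rows in \<open>S\<close> form the identity and whose other rows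
  vanish, only the minor indexed by \<open>S\<close> is nonzero.\<close>

lemma left_kernel_pivot_family:
  fixes G :: "'x \<Rightarrow> 'y \<Rightarrow> 'a::field"
  assumes "finite X" and "finite Y"
  shows "\<exists>P c. P \<subseteq> X \<and> card X \<le> card P + card Y
     \<and> (\<forall>p\<in>P. \<forall>q\<in>P. c p q = (if p = q then 1 else 0))
     \<and> (\<forall>p\<in>P. \<forall>y\<in>Y. (\<Sum>x\<in>X. c p x * G x y) = 0)"
  using \<open>finite Y\<close>
proof (induction Y rule: finite_induct)
  case empty
  show ?case
    by (rule exI[of _ X], rule exI[of _ "\<lambda>p q. if p = q then 1 else 0"]) auto
next
  case (insert y Y)
  then obtain P c where PX: "P \<subseteq> X" and card_P: "card X \<le> card P + card Y"
    and pivot: "\<forall>p\<in>P. \<forall>q\<in>P. c p q = (if p = q then 1 else 0)"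
    and kernel: "\<forall>p\<in>P. \<forall>z\<in>Y. (\<Sum>x\<in>X. c p x * G x z) = 0"
    by blast
  define l where "l p = (\<Sum>x\<in>X. c p x * G x y)" for p
  show ?case
  proof (cases "\<forall>p\<in>P. l p = 0")
    case True
    then show ?thesis
      using PX card_P pivot kernel insert.hyps unfolding l_def
      by (intro exI[of _ P] exI[of _ c]) auto
  next
    case False
    then obtain p0 where p0: "p0 \<in> P" "l p0 \<noteq> 0" by blast
    \<comment> \<open>Gaussian elimination: row \<open>p0\<close> clears column \<open>y\<close> from the other rows and is dropped.\<close>
    define c' where "c' p x = c p x - (l p / l p0) * c p0 x" for p x
    have "finite P" using PX \<open>finite X\<close> finite_subset by blast
    then have "card P = Suc (card (P - {p0}))" using p0 by (metis card_Suc_Diff1)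
    then have card_P': "card X \<le> card (P - {p0}) + card (insert y Y)"
      using card_P insert.hyps by simp
    have pivot': "\<forall>p\<in>P - {p0}. \<forall>q\<in>P - {p0}. c' p q = (if p = q then 1 else 0)"
      using pivot p0 unfolding c'_def by auto
    have kernel': "\<forall>p\<in>P - {p0}. \<forall>z\<in>insert y Y. (\<Sum>x\<in>X. c' p x * G x z) = 0"
    proof (intro ballI)
      fix p z assume p: "p \<in> P - {p0}" and z: "z \<in> insert y Y"
      have "(\<Sum>x\<in>X. c' p x * G x z)
          = (\<Sum>x\<in>X. c p x * G x z) - (l p / l p0) * (\<Sum>x\<in>X. c p0 x * G x z)"
        unfolding c'_def by (simp add: algebra_simps sum_subtractf sum_distrib_left)
      also have "\<dots> = 0"
        using z p p0 kernel unfolding l_def by auto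
      finally show "(\<Sum>x\<in>X. c' p x * G x z) = 0" .
    qed
    show ?thesis
      using PX card_P' pivot' kernel' by (intro exI[of _ "P - {p0}"] exI[of _ c']) auto
  qed
qed

lemma Mult2_eq_multisets_of_size: "Mult2 d = multisets_of_size {0..<d} 2"
  unfolding Mult2_def multisets_of_size_def by auto

lemma finite_Mult2: "finite (Mult2 d)"
  by (simp add: Mult2_eq_multisets_of_size finite_multisets_of_size)

lemma card_Mult2: "card (Mult2 d) = Suc d choose 2"
  by (simp add: Mult2_eq_multisets_of_size card_multisets_of_size)

lemma finite_row_subsets: "finite (row_subsets d)"
  unfolding row_subsets_def
  by (rule finite_subset[of _ "Pow (Mult2 d)"]) (auto simp: finite_Mult2)

lemma card_row_subsets: "card (row_subsets d) = (Suc d choose 2) choose d"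
  unfolding row_subsets_def by (simp add: n_subsets finite_Mult2 card_Mult2)

lemma row_subsetsD:
  assumes "S \<in> row_subsets d"
  shows "finite S" and "card S = d" and "S \<subseteq> Mult2 d"
  using assms finite_Mult2 finite_subset unfolding row_subsets_def by auto

definition selector_matrix :: "nat multiset set \<Rightarrow> nat multiset \<Rightarrow> nat \<Rightarrow> real" where
  "selector_matrix q M l = (if l < card q \<and> sorted_list_of_set q ! l = M then 1 else 0)"

lemma minor_rows_selector_matrix:
  assumes S: "S \<in> row_subsets d" and q: "q \<in> row_subsets d"
  shows "minor_rows d (selector_matrix q) S = (if S = q then 1 else 0)"
proof (cases "S = q")
  case True
  define s where "s = sorted_list_of_set q"
  have "length s = d" "distinct s" "set s = q"
    using row_subsetsD[OF q] unfolding s_def by auto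
  then have "mat d d (\<lambda>(i, l). selector_matrix q (s ! i) l) = 1\<^sub>m d"
    unfolding selector_matrix_def s_def[symmetric]
    by (intro eq_matI) (auto simp: distinct_card nth_eq_iff_index_eq)
  then show ?thesis using True unfolding minor_rows_def s_def by simp
next
  case False
  define s where "s = sorted_list_of_set S"
  define A where "A = mat d d (\<lambda>(i, l). selector_matrix q (s ! i) l)"
  have "length s = d" "set s = S" using row_subsetsD[OF S] unfolding s_def by auto
  moreover have "\<not> S \<subseteq> q"
    using False card_subset_eq row_subsetsD[OF S] row_subsetsD[OF q] by metis
  ultimately obtain i0 where i0: "i0 < d" "s ! i0 \<notin> q" by (metis in_set_conv_nth subsetI)
  have zero_diagonal: "(\<Prod>i = 0..<d. A $$ (i, p i)) = 0" if "p permutes {0..<d}" for p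
  proof (rule prod_zero)
    have "p i0 < d" using that i0 permutes_in_image by fastforce
    moreover have "sorted_list_of_set q ! p i0 \<in> q" if "p i0 < card q"
      using that nth_mem[of "p i0" "sorted_list_of_set q"] row_subsetsD(1)[OF q] by simp
    ultimately show "\<exists>i\<in>{0..<d}. A $$ (i, p i) = 0"
      using i0 unfolding A_def selector_matrix_def by (auto intro!: bexI[of _ i0])
  qed simp
  have "det A = (\<Sum>p\<in>{p. p permutes {0..<d}}. signof p * (\<Prod>i = 0..<d. A $$ (i, p i)))"
    by (rule det_def') (simp add: A_def)
  also have "\<dots> = 0"
    by (intro sum.neutral ballI) (simp only: mem_Collect_eq zero_diagonal mult_zero_right)
  finally have "det A = 0" .
  then show ?thesis using False unfolding minor_rows_def A_def s_def by simp
qed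

lemma minor_comb_selector_matrix:
  assumes "q \<in> row_subsets d"
  shows "minor_comb d c (selector_matrix q) = c q"
  using assms finite_row_subsets
  by (simp add: minor_comb_def minor_rows_selector_matrix if_distrib sum.delta cong: if_cong)

text \<open>The matrix \<open>B(V)\<close> of the proof idea is \<open>B(V)\<^sub>M\<^sub>k = \<Sum>\<^sub>u V\<^sub>u * perm_weight M u k\<close>.\<close>

definition perm_weight :: "nat multiset \<Rightarrow> nat \<Rightarrow> nat \<Rightarrow> real" where
  "perm_weight M u k = (if (u, k) \<in> Perm2 M then 1 / real (card (Perm2 M)) else 0)"

lemma Perm2_subset:
  assumes "M \<in> Mult2 d"
  shows "Perm2 M \<subseteq> {0..<d} \<times> {0..<d}"
  using assms unfolding Perm2_def Mult2_def by auto

lemma coef_y_factorization: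
  assumes "M \<in> Mult2 d"
  shows "coef_y a Q K V n j M l
    = (\<Sum>k\<in>{0..<d}. (\<Sum>u\<in>{0..<d}. V u * perm_weight M u k) * attA a Q K k l)"
proof -
  define P where "P = Perm2 M"
  have "(\<Sum>k\<in>{0..<d}. (\<Sum>u\<in>{0..<d}. V u * perm_weight M u k) * attA a Q K k l)
      = (\<Sum>k\<in>{0..<d}. \<Sum>u\<in>{0..<d}. if (u, k) \<in> P then V u * attA a Q K k l else 0)
        / real (card P)"
    unfolding perm_weight_def P_def[symmetric]
    by (simp add: sum_divide_distrib sum_distrib_right) (intro sum.cong refl, auto)
  also have "(\<Sum>k\<in>{0..<d}. \<Sum>u\<in>{0..<d}. if (u, k) \<in> P then V u * attA a Q K k l else 0)
      = (\<Sum>(u, k)\<in>{0..<d} \<times> {0..<d}. if (u, k) \<in> P then V u * attA a Q K k l else 0)"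
    by (subst sum.swap) (simp add: sum.cartesian_product)
  also have "(\<Sum>(u, k)\<in>{0..<d} \<times> {0..<d}. if (u, k) \<in> P then V u * attA a Q K k l else 0)
      = (\<Sum>(u, k)\<in>P. V u * attA a Q K k l)"
    using Perm2_subset[OF assms] unfolding P_def
    by (intro sum.mono_neutral_cong_right) auto
  finally show ?thesis
    unfolding coef_y_def coef_c_def P_def by simp
qed

lemma minor_rows_mult:
  assumes "finite S" and "card S = d"
    and factor: "\<forall>M\<in>S. \<forall>l<d. F M l = (\<Sum>k\<in>{0..<d}. B M k * C k l)"
  shows "minor_rows d F S = minor_rows d B S * det (mat d d (\<lambda>(k, l). C k l))"
proof -
  define s where "s = sorted_list_of_set S"
  have "length s = d" "set s = S" using assms unfolding s_def by auto
  then have "mat d d (\<lambda>(i, l). F (s ! i) l)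
      = mat d d (\<lambda>(i, k). B (s ! i) k) * mat d d (\<lambda>(k, l). C k l)"
    using factor by (intro eq_matI) (auto simp: scalar_prod_def)
  then show ?thesis
    unfolding minor_rows_def s_def[symmetric] by (simp add: det_mult[of _ d])
qed

lemma det_linear_forms_homogeneous:
  fixes \<beta> :: "nat \<Rightarrow> nat \<Rightarrow> nat \<Rightarrow> 'a::comm_ring_1"
  shows "\<exists>g. \<forall>V. det (mat d d (\<lambda>(i, k). \<Sum>u\<in>{0..<m}. V u * \<beta> i u k))
    = (\<Sum>\<alpha>\<in>multisets_of_size {0..<m} d. prod_mset (image_mset V \<alpha>) * g \<alpha>)"
proof -
  define Fs where "Fs = PiE {0..<d} (\<lambda>_. {0..<m})"
  define mon where "mon f = image_mset f (mset_set {0..<d})" for f :: "nat \<Rightarrow> nat"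
  define h where "h f = (\<Sum>p | p permutes {0..<d}. signof p * (\<Prod>i\<in>{0..<d}. \<beta> i (f i) (p i)))"
    for f
  define g where "g \<alpha> = (\<Sum>f\<in>{f \<in> Fs. mon f = \<alpha>}. h f)" for \<alpha>
  have "det (mat d d (\<lambda>(i, k). \<Sum>u\<in>{0..<m}. V u * \<beta> i u k))
    = (\<Sum>\<alpha>\<in>multisets_of_size {0..<m} d. prod_mset (image_mset V \<alpha>) * g \<alpha>)" for V
  proof -
    define L where "L = mat d d (\<lambda>(i, k). \<Sum>u\<in>{0..<m}. V u * \<beta> i u k)"
    have "det L = (\<Sum>p | p permutes {0..<d}. signof p * (\<Prod>i\<in>{0..<d}. L $$ (i, p i)))"
      by (rule det_def') (simp add: L_def)
    also have "\<dots> = (\<Sum>p | p permutes {0..<d}.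
        signof p * (\<Prod>i\<in>{0..<d}. \<Sum>u\<in>{0..<m}. V u * \<beta> i u (p i)))"
      by (intro sum.cong refl arg_cong2[where f = "(*)"] prod.cong)
        (use permutes_in_image in \<open>fastforce simp: L_def\<close>)
    also have "\<dots> = (\<Sum>p | p permutes {0..<d}. signof p
        * (\<Sum>f\<in>Fs. (\<Prod>i\<in>{0..<d}. V (f i)) * (\<Prod>i\<in>{0..<d}. \<beta> i (f i) (p i))))"
      unfolding Fs_def by (subst prod_sum_PiE) (auto simp: prod.distrib)
    also have "\<dots> = (\<Sum>f\<in>Fs. (\<Prod>i\<in>{0..<d}. V (f i)) * h f)"
      unfolding h_def sum_distrib_left by (subst sum.swap) (simp add: algebra_simps)
    also have "\<dots> = (\<Sum>\<alpha>\<in>multisets_of_size {0..<m} d.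
        \<Sum>f\<in>{f \<in> Fs. mon f = \<alpha>}. (\<Prod>i\<in>{0..<d}. V (f i)) * h f)"
    proof (rule sum.group[symmetric])
      show "finite Fs" by (simp add: Fs_def finite_PiE)
      show "finite (multisets_of_size {0..<m} d)" by (simp add: finite_multisets_of_size)
      show "mon ` Fs \<subseteq> multisets_of_size {0..<m} d"
        by (auto simp: Fs_def mon_def multisets_of_size_def PiE_iff)
    qed
    also have "\<dots> = (\<Sum>\<alpha>\<in>multisets_of_size {0..<m} d. prod_mset (image_mset V \<alpha>) * g \<alpha>)"
      unfolding g_def sum_distrib_left
    proof (intro sum.cong refl)
      fix \<alpha> f assume "f \<in> {f \<in> Fs. mon f = \<alpha>}"
      then have "(\<Prod>i\<in>{0..<d}. V (f i)) = prod_mset (image_mset V \<alpha>)"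
        unfolding mon_def prod_unfold_prod_mset by (auto simp: multiset.map_comp comp_def)
      then show "(\<Prod>i\<in>{0..<d}. V (f i)) * h f = prod_mset (image_mset V \<alpha>) * h f" by simp
    qed
    finally show ?thesis unfolding L_def .
  qed
  then show ?thesis by blast
qed

lemma minor_rows_coef_y_homogeneous:
  assumes "S \<in> row_subsets d"
  shows "\<exists>g. \<forall>Q K V. minor_rows d (coef_y a Q K V n j) S
    = det (mat d d (\<lambda>(k, l). attA a Q K k l))
      * (\<Sum>\<alpha>\<in>multisets_of_size {0..<d} d. prod_mset (image_mset V \<alpha>) * g \<alpha>)"
proof -
  define s where "s = sorted_list_of_set S"
  obtain g where g: "\<forall>V. det (mat d d (\<lambda>(i, k). \<Sum>u\<in>{0..<d}. V u * perm_weight (s ! i) u k))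
      = (\<Sum>\<alpha>\<in>multisets_of_size {0..<d} d. prod_mset (image_mset V \<alpha>) * g \<alpha>)"
    using det_linear_forms_homogeneous[where \<beta> = "\<lambda>i. perm_weight (s ! i)" and m = d] by blast
  have "minor_rows d (coef_y a Q K V n j) S
      = minor_rows d (\<lambda>M k. \<Sum>u\<in>{0..<d}. V u * perm_weight M u k) S
        * det (mat d d (\<lambda>(k, l). attA a Q K k l))" for Q K V
    using row_subsetsD[OF assms] coef_y_factorization by (intro minor_rows_mult) auto
  then show ?thesis
    using g unfolding minor_rows_def s_def[symmetric] by (auto simp: mult.commute)
qed

lemma vanishing_minor_combs:
  obtains P c where "P \<subseteq> row_subsets d"
    and "(Suc d choose 2) choose d \<le> card P + ((2 * d - 1) choose d)"
    and "\<forall>p\<in>P. \<forall>q\<in>P. c p q = (if p = q then 1 else 0)"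
    and "\<forall>p\<in>P. \<forall>Q K V. minor_comb d (c p) (coef_y a Q K V n j) = 0"
proof -
  define X where "X = row_subsets d"
  define Y where "Y = multisets_of_size {0..<d} d"
  have "\<forall>S\<in>X. \<exists>h. \<forall>Q K V. minor_rows d (coef_y a Q K V n j) S
      = det (mat d d (\<lambda>(k, l). attA a Q K k l))
        * (\<Sum>\<alpha>\<in>Y. prod_mset (image_mset V \<alpha>) * h \<alpha>)"
    using minor_rows_coef_y_homogeneous unfolding X_def Y_def by blast
  then obtain g where g: "\<forall>S\<in>X. \<forall>Q K V. minor_rows d (coef_y a Q K V n j) S
      = det (mat d d (\<lambda>(k, l). attA a Q K k l))
        * (\<Sum>\<alpha>\<in>Y. prod_mset (image_mset V \<alpha>) * g S \<alpha>)"
    by (rule bchoice[THEN exE])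
  have "finite X" "finite Y" by (simp_all add: X_def Y_def finite_row_subsets finite_multisets_of_size)
  then obtain P c where PX: "P \<subseteq> X" and card_P: "card X \<le> card P + card Y"
    and pivot: "\<forall>p\<in>P. \<forall>q\<in>P. c p q = (if p = q then 1 else 0)"
    and kernel: "\<forall>p\<in>P. \<forall>\<alpha>\<in>Y. (\<Sum>S\<in>X. c p S * g S \<alpha>) = (0::real)"
    using left_kernel_pivot_family[of X Y g] by blast
  have vanish: "minor_comb d (c p) (coef_y a Q K V n j) = 0" if "p \<in> P" for p Q K V
  proof -
    have "minor_comb d (c p) (coef_y a Q K V n j)
        = (\<Sum>S\<in>X. c p S * (det (mat d d (\<lambda>(k, l). attA a Q K k l))
            * (\<Sum>\<alpha>\<in>Y. prod_mset (image_mset V \<alpha>) * g S \<alpha>)))"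
      unfolding minor_comb_def X_def[symmetric] using g by simp
    also have "\<dots> = det (mat d d (\<lambda>(k, l). attA a Q K k l))
        * (\<Sum>\<alpha>\<in>Y. prod_mset (image_mset V \<alpha>) * (\<Sum>S\<in>X. c p S * g S \<alpha>))"
      by (simp add: sum_distrib_left algebra_simps) (subst sum.swap, simp)
    also have "\<dots> = 0" using kernel that by simp
    finally show ?thesis .
  qed
  have "(Suc d choose 2) choose d \<le> card P + ((2 * d - 1) choose d)"
    using card_P card_row_subsets unfolding X_def Y_def by (simp add: card_multisets_of_size mult_2)
  with PX pivot vanish show thesis unfolding X_def by (intro that) auto
qed

lemma minor_combs_independent:
  fixes w :: "'i \<Rightarrow> real"
  assumes "P \<subseteq> row_subsets d"
    and pivot: "\<forall>p\<in>P. \<forall>q\<in>P. c p q = (if p = q then 1 else 0)"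
    and "finite I" and "h ` I \<subseteq> P" and "inj_on h I"
    and zero: "\<forall>F. (\<Sum>i\<in>I. w i * minor_comb d (c (h i)) F) = 0"
    and "i \<in> I"
  shows "w i = 0"
proof -
  have "0 = (\<Sum>i'\<in>I. w i' * minor_comb d (c (h i')) (selector_matrix (h i)))"
    using zero by simp
  also have "\<dots> = (\<Sum>i'\<in>I. w i' * (if i' = i then 1 else 0))"
  proof (intro sum.cong refl)
    fix i' assume "i' \<in> I"
    then have "h i \<in> P" and "h i' \<in> P" and "h i' = h i \<longleftrightarrow> i' = i"
      using assms(4,5,7) by (auto simp: inj_on_eq_iff)
    then have "h i \<in> row_subsets d" and "c (h i') (h i) = (if i' = i then 1 else 0)"
      using assms(1) pivot by auto
    then show "w i' * minor_comb d (c (h i')) (selector_matrix (h i))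
        = w i' * (if i' = i then 1 else 0)"
      by (simp add: minor_comb_selector_matrix)
  qed
  also have "\<dots> = w i" using assms by (simp add: if_distrib sum.delta cong: if_cong)
  finally show ?thesis by simp
qed

theorem mainTheorem11:
  fixes d a t n j :: nat
  assumes "d \<ge> 2" and "a \<ge> d" and "t \<ge> 2"
    and "n < t" and "j < t" and "n \<noteq> j"
  shows "\<exists>c :: nat \<Rightarrow> nat multiset set \<Rightarrow> real.
           (\<forall>w :: nat \<Rightarrow> real.
              (\<forall>F. (\<Sum>i < (((Suc d choose 2) choose d) - ((2 * d - 1) choose d)).
                        w i * minor_comb d (c i) F) = 0)
              \<longrightarrow> (\<forall>i < (((Suc d choose 2) choose d) - ((2 * d - 1) choose d)). w i = 0))
         \<and> (\<forall>i < (((Suc d choose 2) choose d) - ((2 * d - 1) choose d)).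
              \<forall>Q K V. minor_comb d (c i) (coef_y a Q K V n j) = 0)"
proof -
  define N where "N = ((Suc d choose 2) choose d) - ((2 * d - 1) choose d)"
  obtain P c where PX: "P \<subseteq> row_subsets d"
    and card_P: "(Suc d choose 2) choose d \<le> card P + ((2 * d - 1) choose d)"
    and pivot: "\<forall>p\<in>P. \<forall>q\<in>P. c p q = (if p = q then 1 else 0)"
    and vanish: "\<forall>p\<in>P. \<forall>Q K V. minor_comb d (c p) (coef_y a Q K V n j) = 0"
    using vanishing_minor_combs by blast
  have "finite P" using PX finite_row_subsets finite_subset by blast
  moreover have "card {..<N} \<le> card P" using card_P unfolding N_def by simp
  ultimately obtain h where hP: "h ` {..<N} \<subseteq> P" and h_inj: "inj_on h {..<N}"
    using card_le_inj[of "{..<N}" P] by blast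
  show ?thesis
    unfolding N_def[symmetric]
  proof (intro exI[of _ "\<lambda>i. c (h i)"] conjI allI impI)
    fix w :: "nat \<Rightarrow> real" and i
    assume "\<forall>F. (\<Sum>i<N. w i * minor_comb d (c (h i)) F) = 0" and "i < N"
    with PX pivot hP h_inj show "w i = 0" by (intro minor_combs_independent) auto
  next
    fix i Q K V assume "i < N"
    with vanish hP show "minor_comb d (c (h i)) (coef_y a Q K V n j) = 0" by auto
  qed
qed

end
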